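(* The set $$S=\{e\in\omega : W_e \text{ is self-constructing}\}$$ is $\Pi^0_2$-complete; that is, $S$ is a $\Pi^0_2$ set and every $\Pi^0_2$ subset of $\omega$ is many-one reducible to $S$. In particular, the set $\mathrm{Tot}=\{e : W_e=\omega\}$ is many-one reducible to $S$.
   Context: $\omega$ denotes the set of natural numbers $\{0,1,2,\dots\}$. $\langle \psi_e : e\in\omega\rangle$ is a standard (acceptable, in the sense of Rogers) computable numbering of all partial computable functions from $\omega$ to $\omega$, and $W_e$ denotes the domain of $\psi_e$. A nonempty computably enumerable set $A\subseteq\omega$ is called self-constructing if $W_e=A$ for every $e\in A$. *)

theory Defs
  imports Main "HOL-Library.Nat_Bijection"
begin

text \<open>A standard model of the partial computable functions: unary mu-recursive
  functions on natural numbers, with pairs coded by the Cantor pairing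
  prod_encode / prod_decode.\<close>

datatype recf =
    Zero
  | Succ
  | Fst
  | Snd
  | Comp recf recf
  | Pair recf recf
  | Rec recf recf
  | Mu recf

inductive eval :: "recf \<Rightarrow> nat \<Rightarrow> nat \<Rightarrow> bool" where
  eval_Zero: "eval Zero x 0"
| eval_Succ: "eval Succ x (Suc x)"
| eval_Fst: "eval Fst x (fst (prod_decode x))"
| eval_Snd: "eval Snd x (snd (prod_decode x))"
| eval_Comp: "eval g x y \<Longrightarrow> eval f y z \<Longrightarrow> eval (Comp f g) x z"
| eval_Pair: "eval f x a \<Longrightarrow> eval g x b \<Longrightarrow> eval (Pair f g) x (prod_encode (a, b))"
| eval_Rec0: "eval f x y \<Longrightarrow> eval (Rec f g) (prod_encode (0, x)) y"
| eval_RecS: "eval (Rec f g) (prod_encode (n, x)) y \<Longrightarrow>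
              eval g (prod_encode (n, prod_encode (y, x))) z \<Longrightarrow>
              eval (Rec f g) (prod_encode (Suc n, x)) z"
| eval_Mu: "eval f (prod_encode (n, x)) 0 \<Longrightarrow>
            (\<forall>m<n. \<exists>v. v \<noteq> 0 \<and> eval f (prod_encode (m, x)) v) \<Longrightarrow>
            eval (Mu f) x n"

primrec enc :: "recf \<Rightarrow> nat" where
  "enc Zero = prod_encode (0, 0)"
| "enc Succ = prod_encode (1, 0)"
| "enc Fst = prod_encode (2, 0)"
| "enc Snd = prod_encode (3, 0)"
| "enc (Comp f g) = prod_encode (4, prod_encode (enc f, enc g))"
| "enc (Pair f g) = prod_encode (5, prod_encode (enc f, enc g))"
| "enc (Rec f g) = prod_encode (6, prod_encode (enc f, enc g))"
| "enc (Mu f) = prod_encode (7, enc f)"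

text \<open>The standard numbering psi_e of the partial computable functions
  (indices that do not code a program denote the empty function).\<close>
definition psi :: "nat \<Rightarrow> nat \<Rightarrow> nat option" where
  "psi e x = (if e \<in> range enc \<and> (\<exists>y. eval (inv enc e) x y)
              then Some (THE y. eval (inv enc e) x y) else None)"

definition W :: "nat \<Rightarrow> nat set" where
  "W e = dom (psi e)"

definition total_computable :: "(nat \<Rightarrow> nat) \<Rightarrow> bool" where
  "total_computable f \<longleftrightarrow> (\<exists>c. \<forall>x. eval c x (f x))"

definition computable_set :: "nat set \<Rightarrow> bool" where
  "computable_set R \<longleftrightarrow> total_computable (\<lambda>x. if x \<in> R then 1 else 0)"

definition Pi02 :: "nat set \<Rightarrow> bool" where
  "Pi02 A \<longleftrightarrow> (\<exists>R. computable_set R \<and>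
      (\<forall>x. x \<in> A \<longleftrightarrow> (\<forall>y. \<exists>z. prod_encode (x, prod_encode (y, z)) \<in> R)))"

definition m_reducible :: "nat set \<Rightarrow> nat set \<Rightarrow> bool" where
  "m_reducible A B \<longleftrightarrow> (\<exists>f. total_computable f \<and> (\<forall>x. x \<in> A \<longleftrightarrow> f x \<in> B))"

definition ce_set :: "nat set \<Rightarrow> bool" where
  "ce_set A \<longleftrightarrow> (\<exists>e. W e = A)"

definition self_constructing :: "nat set \<Rightarrow> bool" where
  "self_constructing A \<longleftrightarrow> A \<noteq> {} \<and> ce_set A \<and> (\<forall>e\<in>A. W e = A)"

definition Tot :: "nat set" where
  "Tot = {e. W e = UNIV}"

end

theory Submission
  imports Defs
begin

(* Upper bound.  e \<in> S says that W e is nonempty and that a \<in> W e implies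
   W a = W e; this is a \<forall>\<exists>-statement about the halting relation b \<in> W a.
   We prove a Kleene normal form  b \<in> W a \<longleftrightarrow> (\<exists>w. halts_by a b w)  with
   halts_by decidable.  A halting computation is certified by a finite
   "trace": a list of triples <program, input, output>, each obtained from
   earlier entries by one rule of the evaluation relation.  Traces are coded
   by numbers, and checking a coded trace only needs bounded quantifiers.

   For A = {x. \<forall>y. \<exists>z. R x y z} with R decidable, say that
   stage j of x is reached if some bound w witnesses all y \<le> j.  Using an
   s-m-n construction we build one program m together with indices
   c x i = family_index m x i (the program receives its own code m as a
   parameter, so no recursion theorem is needed) such that
   W (c x i) = {c x j | j \<le> i + 1 or stage j of x is reached}.
   Then W (c x 0) is self-constructing iff every stage is reached iff x \<in> A. *)

abbreviation pe :: "nat \<Rightarrow> nat \<Rightarrow> nat" where "pe a b \<equiv> prod_encode (a, b)"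
abbreviation p1 :: "nat \<Rightarrow> nat" where "p1 x \<equiv> fst (prod_decode x)"
abbreviation p2 :: "nat \<Rightarrow> nat" where "p2 x \<equiv> snd (prod_decode x)"

lemma pe_unpair: "pe (p1 x) (p2 x) = x"
  by (metis prod.collapse prod_decode_inverse)

inductive_cases ZeroE: "eval Zero x y"
inductive_cases SuccE: "eval Succ x y"
inductive_cases FstE: "eval Fst x y"
inductive_cases SndE: "eval Snd x y"
inductive_cases CompE: "eval (Comp f g) x y"
inductive_cases PairE: "eval (recf.Pair f g) x y"
inductive_cases RecE: "eval (Rec f g) x y"
inductive_cases MuE: "eval (Mu f) x y"

lemma eval_det: "eval f x y \<Longrightarrow> eval f x y' \<Longrightarrow> y' = y"
proof (induction arbitrary: y' rule: eval.induct)
  case (eval_Zero x) then show ?case by (rule ZeroE) simp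
next
  case (eval_Succ x) then show ?case by (rule SuccE) simp
next
  case (eval_Fst x) then show ?case by (rule FstE) simp
next
  case (eval_Snd x) then show ?case by (rule SndE) simp
next
  case (eval_Comp g x y f z)
  from eval_Comp.prems obtain w where "eval g x w" "eval f w y'" by (rule CompE)
  then show ?case using eval_Comp.IH by metis
next
  case (eval_Pair f x a g b)
  from eval_Pair.prems obtain a' b' where "eval f x a'" "eval g x b'" "y' = pe a' b'" by (rule PairE)
  then show ?case using eval_Pair.IH by metis
next
  case (eval_Rec0 f x y g)
  from eval_Rec0.prems show ?case
  proof (rule RecE)
    fix x0 assume "pe 0 x = pe 0 x0" "eval f x0 y'"
    then show ?thesis using eval_Rec0.IH by simp
  next
    fix n x0 w assume "pe 0 x = pe (Suc n) x0"
    then show ?thesis by simp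
  qed
next
  case (eval_RecS f g n x y z)
  from eval_RecS.prems show ?case
  proof (rule RecE)
    fix x0 assume "pe (Suc n) x = pe 0 x0"
    then show ?thesis by simp
  next
    fix n' x0 w assume h: "pe (Suc n) x = pe (Suc n') x0" "eval (Rec f g) (pe n' x0) w"
      "eval g (pe n' (pe w x0)) y'"
    from h(1) have "n' = n" "x0 = x" by simp_all
    with h eval_RecS.IH show ?thesis by metis
  qed
next
  case (eval_Mu f n x)
  from eval_Mu.prems show ?case
  proof (rule MuE)
    assume h1: "eval f (pe y' x) 0" and h2: "\<forall>m<y'. \<exists>v>0. eval f (pe m x) v"
    show ?thesis
    proof (rule ccontr)
      assume "y' \<noteq> n"
      then consider "y' < n" | "n < y'" by linarith
      then show False
      proof cases
        case 1
        then obtain v where "v \<noteq> 0" "eval f (pe y' x) v" "\<And>v'. eval f (pe y' x) v' \<Longrightarrow> v' = v"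
          using eval_Mu.IH(2) by blast
        with h1 show False by blast
      next
        case 2
        then obtain v where "v > 0" "eval f (pe n x) v" using h2 by blast
        with eval_Mu.IH(1) show False by blast
      qed
    qed
  qed
qed

lemma inj_enc: "inj enc"
proof
  fix a b show "enc a = enc b \<Longrightarrow> a = b"
    by (induction a arbitrary: b; case_tac b; auto)
qed

lemma inv_enc[simp]: "inv enc (enc P) = P" by (simp add: inj_enc)

named_theorems computable_intros

lemma computable_id[computable_intros]: "total_computable (\<lambda>x. x)"
proof -
  have "eval (Pair Fst Snd) x x" for x
    using eval_Pair[OF eval_Fst eval_Snd, of x] by (simp add: pe_unpair)
  then show ?thesis unfolding total_computable_def by blast
qed

primrec konst :: "nat \<Rightarrow> recf" where
  "konst 0 = Zero" | "konst (Suc n) = Comp Succ (konst n)"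

lemma eval_konst: "eval (konst n) x n"
  by (induction n) (auto intro: eval.intros)

lemma computable_const[computable_intros]: "total_computable (\<lambda>x. c)"
  unfolding total_computable_def using eval_konst by blast

lemma computable_compose: "total_computable f \<Longrightarrow> total_computable g \<Longrightarrow> total_computable (\<lambda>x. f (g x))"
  unfolding total_computable_def by (blast intro: eval_Comp)

lemma computable_pe[computable_intros]: "total_computable f \<Longrightarrow> total_computable g \<Longrightarrow> total_computable (\<lambda>x. pe (f x) (g x))"
  unfolding total_computable_def by (blast intro: eval_Pair)

lemma computable_p1[computable_intros]: "total_computable f \<Longrightarrow> total_computable (\<lambda>x. p1 (f x))"
  unfolding total_computable_def by (blast intro: eval_Comp eval_Fst)

lemma computable_p2[computable_intros]: "total_computable f \<Longrightarrow> total_computable (\<lambda>x. p2 (f x))"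
  unfolding total_computable_def by (blast intro: eval_Comp eval_Snd)

lemma computable_Suc[computable_intros]: "total_computable f \<Longrightarrow> total_computable (\<lambda>x. Suc (f x))"
  unfolding total_computable_def by (blast intro: eval_Comp eval_Succ)

lemma eval_Rec_rec_nat:
  assumes "\<And>x. eval F x (f x)" "\<And>v. eval G v (g v)"
  shows "eval (Rec F G) (pe n x) (rec_nat (f x) (\<lambda>k y. g (pe k (pe y x))) n)"
  by (induction n) (auto intro: eval.intros assms)

lemma computable_rec_nat_pair:
  assumes "total_computable f" "total_computable g"
  shows "total_computable (\<lambda>z. rec_nat (f (p2 z)) (\<lambda>k y. g (pe k (pe y (p2 z)))) (p1 z))"
proof -
  obtain F G where "\<And>x. eval F x (f x)" "\<And>v. eval G v (g v)" using assms unfolding total_computable_def by blast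
  from eval_Rec_rec_nat[OF this] have "eval (Rec F G) z (rec_nat (f (p2 z)) (\<lambda>k y. g (pe k (pe y (p2 z)))) (p1 z))" for z
    by (metis pe_unpair)
  then show ?thesis unfolding total_computable_def by blast
qed

lemma computable_rec_nat:
  assumes "total_computable f" "total_computable g" "total_computable a" "total_computable b"
  shows "total_computable (\<lambda>w. rec_nat (f (b w)) (\<lambda>k y. g (pe k (pe y (b w)))) (a w))"
  using computable_compose[OF computable_rec_nat_pair[OF assms(1,2)] computable_pe[OF assms(3,4)]] by simp

lemma computable_ifz[computable_intros]:
  assumes "total_computable c" "total_computable g" "total_computable h"
  shows "total_computable (\<lambda>x. if c x = 0 then h x else g x)"
proof -
  have "total_computable (\<lambda>x. rec_nat (h x) (\<lambda>k y. (\<lambda>v. g (p2 (p2 v))) (pe k (pe y x))) (c x))"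
    by (rule computable_rec_nat[where b="\<lambda>x. x"]) (auto intro!: computable_intros assms computable_compose[OF assms(2)])
  moreover have "rec_nat (h x) (\<lambda>k y. (\<lambda>v. g (p2 (p2 v))) (pe k (pe y x))) n = (if n = 0 then h x else g x)" for x n
    by (cases n) auto
  ultimately show ?thesis by simp
qed

lemma computable_add[computable_intros]:
  assumes "total_computable f" "total_computable g" shows "total_computable (\<lambda>x. f x + g x)"
proof -
  have h: "total_computable (\<lambda>v. Suc (p1 (p2 v)))" by (intro computable_intros)
  have "total_computable (\<lambda>x. rec_nat (f x) (\<lambda>k y. Suc y) (g x))"
    using computable_rec_nat[OF computable_id h assms(2) assms(1)] by simp
  moreover have "rec_nat a (\<lambda>k y. Suc y) n = a + n" for a n
    by (induction n) auto
  ultimately show ?thesis by simp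
qed

lemma computable_pred1: "total_computable (\<lambda>x. x - 1)"
proof -
  have h: "total_computable (\<lambda>v. p1 v)" by (intro computable_intros)
  have "total_computable (\<lambda>x. rec_nat 0 (\<lambda>k y. k) x)"
    using computable_rec_nat[OF computable_const h computable_id computable_id] by simp
  moreover have "rec_nat 0 (\<lambda>k y. k) n = n - 1" for n
    by (cases n) auto
  ultimately show ?thesis by simp
qed

lemma computable_diff[computable_intros]:
  assumes "total_computable f" "total_computable g" shows "total_computable (\<lambda>x. f x - g x)"
proof -
  have h: "total_computable (\<lambda>v. p1 (p2 v) - 1)" by (rule computable_compose[OF computable_pred1]) (intro computable_intros)
  have "total_computable (\<lambda>x. rec_nat (f x) (\<lambda>k y. y - 1) (g x))"
    using computable_rec_nat[OF computable_id h assms(2) assms(1)] by simp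
  moreover have "rec_nat a (\<lambda>k y. y - 1) n = a - n" for a n
    by (induction n) auto
  ultimately show ?thesis by simp
qed

definition decidable :: "(nat \<Rightarrow> bool) \<Rightarrow> bool" where
  "decidable P \<longleftrightarrow> total_computable (\<lambda>x. if P x then 1 else 0)"

lemma computable_if[computable_intros]:
  assumes "decidable P" "total_computable g" "total_computable h"
  shows "total_computable (\<lambda>x. if P x then g x else h x)"
proof -
  have "total_computable (\<lambda>x. if (\<lambda>x. if P x then 1 else (0::nat)) x = 0 then h x else g x)"
    using computable_ifz[OF assms[unfolded decidable_def]] by simp
  moreover have "(\<lambda>x. if (\<lambda>x. if P x then 1 else (0::nat)) x = 0 then h x else g x) = (\<lambda>x. if P x then g x else h x)"
    by auto
  ultimately show ?thesis by simp
qed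

lemma decidableI: "total_computable f \<Longrightarrow> (\<And>x. P x \<longleftrightarrow> f x \<noteq> 0) \<Longrightarrow> decidable P"
proof -
  assume f: "total_computable f" and P: "\<And>x. P x \<longleftrightarrow> f x \<noteq> 0"
  have "total_computable (\<lambda>x. if f x = 0 then 0 else 1)" by (rule computable_ifz[OF f computable_const computable_const])
  moreover have "(\<lambda>x. if f x = 0 then 0 else 1) = (\<lambda>x. if P x then 1 else (0::nat))" using P by auto
  ultimately show ?thesis unfolding decidable_def by simp
qed

lemma decidable_eq[computable_intros]: assumes "total_computable f" "total_computable g" shows "decidable (\<lambda>x. f x = g x)"
proof (rule decidableI[where f="\<lambda>x. if (f x - g x) + (g x - f x) = 0 then 1 else 0"])
  show "total_computable (\<lambda>x. if (f x - g x) + (g x - f x) = 0 then 1 else 0)"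
    by (intro computable_ifz computable_add computable_diff computable_const assms)
qed auto

lemma decidable_le[computable_intros]: assumes "total_computable f" "total_computable g" shows "decidable (\<lambda>x. f x \<le> g x)"
proof (rule decidableI[where f="\<lambda>x. if (f x - g x) = 0 then 1 else 0"])
  show "total_computable (\<lambda>x. if (f x - g x) = 0 then 1 else 0)"
    by (intro computable_ifz computable_add computable_diff computable_const assms)
qed auto

lemma decidable_not[computable_intros]: "decidable P \<Longrightarrow> decidable (\<lambda>x. \<not> P x)"
  by (rule decidableI[where f="\<lambda>x. if P x then 0 else 1"]) (auto intro!: computable_intros)

lemma decidable_and[computable_intros]: "decidable P \<Longrightarrow> decidable Q \<Longrightarrow> decidable (\<lambda>x. P x \<and> Q x)"
  by (rule decidableI[where f="\<lambda>x. if P x then (if Q x then 1 else 0) else 0"]) (auto intro!: computable_intros)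

lemma decidable_or[computable_intros]: "decidable P \<Longrightarrow> decidable Q \<Longrightarrow> decidable (\<lambda>x. P x \<or> Q x)"
  by (rule decidableI[where f="\<lambda>x. if P x then 1 else (if Q x then 1 else 0)"]) (auto intro!: computable_intros)

lemma decidable_imp[computable_intros]: "decidable P \<Longrightarrow> decidable Q \<Longrightarrow> decidable (\<lambda>x. P x \<longrightarrow> Q x)"
  by (rule decidableI[where f="\<lambda>x. if P x then (if Q x then 1 else 0) else 1"]) (auto intro!: computable_intros)

lemma decidable_bex[computable_intros]:
  assumes "decidable (\<lambda>z. P (p1 z) (p2 z))" "total_computable b"
  shows "decidable (\<lambda>x. \<exists>i<b x. P x i)"
proof -
  let ?c = "\<lambda>z. if P (p1 z) (p2 z) then 1 else 0::nat"
  have c: "total_computable ?c" using assms(1) unfolding decidable_def .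
  have "total_computable (\<lambda>x. rec_nat ((\<lambda>_. 0) x) (\<lambda>k y. (\<lambda>v. if p1 (p2 v) = 0 then ?c (pe (p2 (p2 v)) (p1 v)) else 1) (pe k (pe y x))) (b x))"
    by (rule computable_rec_nat) (auto intro!: computable_intros assms computable_compose[OF c])
  moreover have "rec_nat 0 (\<lambda>k y. (\<lambda>v. if p1 (p2 v) = 0 then ?c (pe (p2 (p2 v)) (p1 v)) else 1) (pe k (pe y x))) n
      = (if \<exists>i<n. P x i then 1 else 0)" for x n
    by (induction n) (auto simp: less_Suc_eq)
  ultimately show ?thesis unfolding decidable_def by simp
qed

lemma decidable_ball[computable_intros]:
  assumes "decidable (\<lambda>z. P (p1 z) (p2 z))" "total_computable b"
  shows "decidable (\<lambda>x. \<forall>i<b x. P x i)"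
proof -
  have "decidable (\<lambda>x. \<not> (\<exists>i<b x. \<not> P x i))"
    by (intro computable_intros assms)
  then show ?thesis by simp
qed

lemma decidable_compose: "decidable P \<Longrightarrow> total_computable g \<Longrightarrow> decidable (\<lambda>x. P (g x))"
  unfolding decidable_def by (drule computable_compose) auto

lemma decidable_mem: "computable_set R \<Longrightarrow> total_computable f \<Longrightarrow> decidable (\<lambda>x. f x \<in> R)"
  unfolding computable_set_def decidable_def
  by (drule computable_compose) auto

definition tri :: "nat \<Rightarrow> nat \<Rightarrow> nat \<Rightarrow> nat" where "tri c x y = pe c (pe x y)"

abbreviation tc :: "nat \<Rightarrow> nat" where "tc v \<equiv> p1 v"
abbreviation tx :: "nat \<Rightarrow> nat" where "tx v \<equiv> p1 (p2 v)"
abbreviation ty :: "nat \<Rightarrow> nat" where "ty v \<equiv> p2 (p2 v)"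

lemma tri_simps[simp]: "tc (tri c x y) = c" "tx (tri c x y) = x" "ty (tri c x y) = y"
  by (auto simp: tri_def)

lemma tri_unpair: "tri (tc v) (tx v) (ty v) = v" by (simp add: tri_def pe_unpair)

lemma computable_tri[computable_intros]:
  "total_computable f \<Longrightarrow> total_computable g \<Longrightarrow> total_computable h \<Longrightarrow> total_computable (\<lambda>x. tri (f x) (g x) (h x))"
  unfolding tri_def by (intro computable_intros)

definition valid :: "nat \<Rightarrow> bool" where
  "valid v \<longleftrightarrow> tc v \<in> range enc \<and> eval (inv enc (tc v)) (tx v) (ty v)"

lemma valid_triple: "valid (tri (enc P) x y) \<longleftrightarrow> eval P x y"
  by (simp add: valid_def)

lemma validE: "valid (tri c x y) \<Longrightarrow> (\<And>P. c = enc P \<Longrightarrow> eval P x y \<Longrightarrow> thesis) \<Longrightarrow> thesis"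
  by (auto simp: valid_def)

(* eval_step C E v: the triple v follows from the triples in E by one rule of
   eval, where C is a set of program codes that are already known to be codes
   (the rule for Rec with counter 0 does not evaluate its step program). *)

definition eval_step :: "nat set \<Rightarrow> nat set \<Rightarrow> nat \<Rightarrow> bool" where
  "eval_step C E v \<longleftrightarrow>
   (p1 (tc v) = 0 \<and> p2 (tc v) = 0 \<and> ty v = 0) \<or>
   (p1 (tc v) = 1 \<and> p2 (tc v) = 0 \<and> ty v = Suc (tx v)) \<or>
   (p1 (tc v) = 2 \<and> p2 (tc v) = 0 \<and> ty v = p1 (tx v)) \<or>
   (p1 (tc v) = 3 \<and> p2 (tc v) = 0 \<and> ty v = p2 (tx v)) \<or>
   (p1 (tc v) = 4 \<and> (\<exists>e\<in>E. tc e = p2 (p2 (tc v)) \<and> tx e = tx v \<and> tri (p1 (p2 (tc v))) (ty e) (ty v) \<in> E)) \<or>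
   (p1 (tc v) = 5 \<and> (\<exists>e1\<in>E. \<exists>e2\<in>E. tc e1 = p1 (p2 (tc v)) \<and> tx e1 = tx v \<and>
        tc e2 = p2 (p2 (tc v)) \<and> tx e2 = tx v \<and> ty v = pe (ty e1) (ty e2))) \<or>
   (p1 (tc v) = 6 \<and> ((p1 (tx v) = 0 \<and> p2 (p2 (tc v)) \<in> C \<and> tri (p1 (p2 (tc v))) (p2 (tx v)) (ty v) \<in> E) \<or>
       (p1 (tx v) \<noteq> 0 \<and> (\<exists>e\<in>E. tc e = tc v \<and> tx e = pe (p1 (tx v) - 1) (p2 (tx v)) \<and>
          tri (p2 (p2 (tc v))) (pe (p1 (tx v) - 1) (pe (ty e) (p2 (tx v)))) (ty v) \<in> E)))) \<or>
   (p1 (tc v) = 7 \<and> tri (p2 (tc v)) (pe (ty v) (tx v)) 0 \<in> E \<and>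
       (\<forall>m<ty v. \<exists>e\<in>E. tc e = p2 (tc v) \<and> tx e = pe m (tx v) \<and> ty e \<noteq> 0))"

lemma eval_step_cases:
  assumes "eval_step C E (tri (pe tag (pe cf cg)) x y)"
  obtains "tag = 0" "pe cf cg = 0" "y = 0" | "tag = 1" "pe cf cg = 0" "y = Suc x" | "tag = 2" "pe cf cg = 0" "y = p1 x"
   | "tag = 3" "pe cf cg = 0" "y = p2 x"
   | e where "tag = 4" "e \<in> E" "tc e = cg" "tx e = x" "tri cf (ty e) y \<in> E"
   | e1 e2 where "tag = 5" "e1 \<in> E" "e2 \<in> E" "tc e1 = cf" "tx e1 = x" "tc e2 = cg" "tx e2 = x" "y = pe (ty e1) (ty e2)"
   | "tag = 6" "p1 x = 0" "cg \<in> C" "tri cf (p2 x) y \<in> E"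
   | e where "tag = 6" "p1 x \<noteq> 0" "e \<in> E" "tc e = pe tag (pe cf cg)" "tx e = pe (p1 x - 1) (p2 x)"
        "tri cg (pe (p1 x - 1) (pe (ty e) (p2 x))) y \<in> E"
   | "tag = 7" "tri (pe cf cg) (pe y x) 0 \<in> E" "\<forall>m<y. \<exists>e\<in>E. tc e = pe cf cg \<and> tx e = pe m x \<and> ty e \<noteq> 0"
  using assms unfolding eval_step_def by auto

lemma valid_RecS:
  assumes "valid (tri (pe 6 (pe cf cg)) (pe n x) y)" and "valid (tri cg (pe n (pe y x)) z)"
  shows "valid (tri (pe 6 (pe cf cg)) (pe (Suc n) x) z)"
proof -
  from assms(1) obtain P where P: "pe 6 (pe cf cg) = enc P" "eval P (pe n x) y" by (rule validE)
  then obtain F G where FG: "P = Rec F G" "cg = enc G" by (cases P) auto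
  from assms(2) obtain G' where "cg = enc G'" "eval G' (pe n (pe y x)) z" by (rule validE)
  with FG have "eval G (pe n (pe y x)) z" using inj_enc by (auto dest: injD)
  with P FG have "eval P (pe (Suc n) x) z" by (auto intro: eval_RecS)
  then show ?thesis using P(1) valid_triple by metis
qed

lemma valid_Mu:
  assumes "valid (tri a (pe y x) 0)" and "\<forall>m<y. \<exists>w. w \<noteq> 0 \<and> valid (tri a (pe m x) w)"
  shows "valid (tri (pe 7 a) x y)"
proof -
  from assms(1) obtain F where F: "a = enc F" "eval F (pe y x) 0" by (rule validE)
  have "\<forall>m<y. \<exists>w. w \<noteq> 0 \<and> eval F (pe m x) w"
    using assms(2) F(1) by (auto elim!: validE dest: injD[OF inj_enc])
  then have "eval (Mu F) x y" using eval_Mu F(2) by blast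
  then show ?thesis using F(1) valid_triple by (metis enc.simps(8))
qed

lemma eval_step_sound:
  assumes C: "C \<subseteq> range enc" and E: "\<forall>e\<in>E. valid e" and J: "eval_step C E v"
  shows "valid v"
proof -
  obtain c x y where v: "v = tri c x y" by (metis tri_unpair)
  obtain tag a where c: "c = pe tag a" by (metis pe_unpair)
  obtain cf cg where a: "a = pe cf cg" by (metis pe_unpair)
  have Es: "\<And>c x y. tri c x y \<in> E \<Longrightarrow> valid (tri c x y)" using E by blast
  have Ee: "\<And>e. e \<in> E \<Longrightarrow> valid (tri (tc e) (tx e) (ty e))" using E by (simp add: tri_unpair)
  from J[unfolded v c a] show ?thesis
  proof (cases rule: eval_step_cases)
    case 1 then show ?thesis using valid_triple[of Zero] by (simp add: v c a eval_Zero)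
  next
    case 2 then show ?thesis using valid_triple[of Succ] by (simp add: v c a eval_Succ)
  next
    case 3 then show ?thesis using valid_triple[of Fst] by (simp add: v c a eval_Fst)
  next
    case 4 then show ?thesis using valid_triple[of Snd] by (simp add: v c a eval_Snd)
  next
    case (5 e)
    from Ee[OF 5(2)] obtain G where G: "cg = enc G" "eval G x (ty e)" using 5 by (auto elim: validE)
    from Es[OF 5(5)] obtain F where F: "cf = enc F" "eval F (ty e) y" by (auto elim: validE)
    have "c = enc (Comp F G)" using c a 5 F G by simp
    then show ?thesis using valid_triple[of "Comp F G"] v eval_Comp[OF G(2) F(2)] by simp
  next
    case (6 e1 e2)
    from Ee[OF 6(2)] obtain F where F: "cf = enc F" "eval F x (ty e1)" using 6 by (auto elim: validE)
    from Ee[OF 6(3)] obtain G where G: "cg = enc G" "eval G x (ty e2)" using 6 by (auto elim: validE)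
    have "c = enc (recf.Pair F G)" using c a 6 F G by simp
    then show ?thesis using valid_triple[of "recf.Pair F G"] v eval_Pair[OF F(2) G(2)] 6 by simp
  next
    case 7
    from Es[OF 7(4)] obtain F where F: "cf = enc F" "eval F (p2 x) y" by (auto elim: validE)
    from C 7(3) obtain G where G: "cg = enc G" by blast
    have "c = enc (Rec F G)" using c a 7 F G by simp
    moreover have "x = pe 0 (p2 x)" using 7(2) by (metis pe_unpair)
    ultimately show ?thesis using valid_triple[of "Rec F G"] v eval_Rec0[OF F(2), of G] by simp
  next
    case (8 e)
    have "valid (tri c (pe (p1 x - 1) (p2 x)) (ty e))" using Ee[OF 8(3)] 8(4,5) by (simp add: c a)
    moreover have "valid (tri cg (pe (p1 x - 1) (pe (ty e) (p2 x))) y)" using Es[OF 8(6)] .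
    ultimately have "valid (tri c (pe (Suc (p1 x - 1)) (p2 x)) y)"
      unfolding c a 8(1) by (rule valid_RecS)
    then show ?thesis using 8(2) by (simp add: v pe_unpair)
  next
    case 9
    have "\<exists>w. w \<noteq> 0 \<and> valid (tri (pe cf cg) (pe m x) w)" if "m < y" for m
    proof -
      obtain e where e: "e \<in> E" "tc e = pe cf cg" "tx e = pe m x" "ty e \<noteq> 0" using 9(3) \<open>m < y\<close> by blast
      then show ?thesis using Ee[OF e(1)] by (intro exI[of _ "ty e"]) simp
    qed
    then have "valid (tri (pe 7 (pe cf cg)) x y)" using Es[OF 9(2)] valid_Mu by blast
    then show ?thesis by (simp add: v c a 9(1))
  qed
qed

definition code_step :: "nat set \<Rightarrow> nat \<Rightarrow> bool" where
  "code_step C c \<longleftrightarrow> (p1 c \<le> 3 \<and> p2 c = 0) \<or>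
     ((p1 c = 4 \<or> p1 c = 5 \<or> p1 c = 6) \<and> p1 (p2 c) \<in> C \<and> p2 (p2 c) \<in> C) \<or>
     (p1 c = 7 \<and> p2 c \<in> C)"

definition justified :: "(nat set \<Rightarrow> nat \<Rightarrow> bool) \<Rightarrow> nat list \<Rightarrow> bool" where
  "justified J L \<longleftrightarrow> (\<forall>k<length L. J (set (take k L)) (L ! k))"

lemma set_take_nth: "set (take k L) = (\<lambda>i. L ! i) ` {..<min k (length L)}"
proof -
  have "set (take k L) = {take k L ! i | i. i < length (take k L)}" by (rule set_conv_nth)
  also have "\<dots> = (\<lambda>i. L ! i) ` {..<min k (length L)}"
  proof (rule set_eqI)
    fix z show "z \<in> {take k L ! i | i. i < length (take k L)} \<longleftrightarrow> z \<in> (\<lambda>i. L ! i) ` {..<min k (length L)}"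
      by (auto simp: image_iff) (metis min_less_iff_conj nth_take)
  qed
  finally show ?thesis .
qed

lemma justified_induct:
  assumes g: "justified J L" and step: "\<And>E v. \<forall>e\<in>E. Q e \<Longrightarrow> J E v \<Longrightarrow> Q v"
  shows "\<forall>v\<in>set L. Q v"
proof -
  have "\<forall>k<length L. Q (L ! k)"
  proof (intro allI)
    fix k show "k < length L \<longrightarrow> Q (L ! k)"
    proof (induction k rule: less_induct)
      case (less k)
      show ?case
      proof
        assume k: "k < length L"
        have "\<forall>e\<in>set (take k L). Q e" using less k by (auto simp: set_take_nth)
        moreover have "J (set (take k L)) (L ! k)" using g k by (simp add: justified_def)
        ultimately show "Q (L ! k)" by (rule step)
      qed
    qed
  qed
  then show ?thesis by (auto simp: in_set_conv_nth)
qed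

definition mono_steps :: "(nat set \<Rightarrow> nat \<Rightarrow> bool) \<Rightarrow> bool" where
  "mono_steps J \<longleftrightarrow> (\<forall>E E' v. E \<subseteq> E' \<longrightarrow> J E v \<longrightarrow> J E' v)"

lemma justified_append:
  assumes m: "mono_steps J" and g1: "justified J L1" and g2: "justified J L2"
  shows "justified J (L1 @ L2)"
  unfolding justified_def
proof (intro allI impI)
  fix k assume k: "k < length (L1 @ L2)"
  show "J (set (take k (L1 @ L2))) ((L1 @ L2) ! k)"
  proof (cases "k < length L1")
    case True then show ?thesis using g1 by (simp add: justified_def nth_append)
  next
    case False
    then have "J (set (take (k - length L1) L2)) (L2 ! (k - length L1))" using g2 k by (simp add: justified_def)
    moreover have "set (take (k - length L1) L2) \<subseteq> set (take k (L1 @ L2))" using False by auto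
    ultimately have "J (set (take k (L1 @ L2))) (L2 ! (k - length L1))" using m unfolding mono_steps_def by blast
    then show ?thesis using False by (simp add: nth_append)
  qed
qed

lemma justified_Nil[simp]: "justified J []" by (simp add: justified_def)

lemma justified_snoc: "justified J L \<Longrightarrow> J (set L) v \<Longrightarrow> justified J (L @ [v])"
  unfolding justified_def by (auto simp: nth_append less_Suc_eq)

lemma mono_code_step: "mono_steps code_step" unfolding mono_steps_def code_step_def by blast

lemma eval_step_mono: "eval_step C E v \<Longrightarrow> C \<subseteq> C' \<Longrightarrow> E \<subseteq> E' \<Longrightarrow> eval_step C' E' v"
  unfolding eval_step_def by (elim disj_forward) blast+

lemma mono_eval_step: "mono_steps (eval_step C)" unfolding mono_steps_def by (meson eval_step_mono order_refl)

lemma justified_eval_step_mono: "justified (eval_step C) L \<Longrightarrow> C \<subseteq> C' \<Longrightarrow> justified (eval_step C') L"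
  unfolding justified_def by (meson eval_step_mono order_refl)

lemma code_steps_sound: "justified code_step L \<Longrightarrow> set L \<subseteq> range enc"
proof -
  assume g: "justified code_step L"
  have "\<forall>v\<in>set L. v \<in> range enc"
  proof (rule justified_induct[OF g])
    fix E v assume E: "\<forall>e\<in>E. e \<in> range enc" and J: "code_step E v"
    obtain tag a where va: "v = pe tag a" by (metis pe_unpair)
    obtain cf cg where a: "a = pe cf cg" by (metis pe_unpair)
    have J': "(tag \<le> 3 \<and> a = 0) \<or> ((tag = 4 \<or> tag = 5 \<or> tag = 6) \<and> cf \<in> E \<and> cg \<in> E) \<or> (tag = 7 \<and> a \<in> E)"
      using J unfolding code_step_def va a by simp
    show "v \<in> range enc"
    proof (cases "tag \<le> 3 \<and> a = 0")
      case True
      then have "tag = 0 \<or> tag = 1 \<or> tag = 2 \<or> tag = 3" "a = 0" by auto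
      then have "v = enc Zero \<or> v = enc Succ \<or> v = enc Fst \<or> v = enc Snd" unfolding va by auto
      then show ?thesis by blast
    next
      case False
      note J'' = J'[simplified False simp_thms]
      show ?thesis
      proof (cases "tag = 7")
        case True
        then obtain F where "a = enc F" using J'' E by auto
        then have "v = enc (Mu F)" using True va by simp
        then show ?thesis by blast
      next
        case False
        then have t: "(tag = 4 \<or> tag = 5 \<or> tag = 6)" "cf \<in> E" "cg \<in> E" using J'' by auto
        then obtain F G where FG: "cf = enc F" "cg = enc G" using E by blast
        from t(1) have "v = enc (Comp F G) \<or> v = enc (recf.Pair F G) \<or> v = enc (Rec F G)"
          unfolding va a FG by auto
        then show ?thesis by blast
      qed
    qed
  qed
  then show ?thesis by blast
qed

lemma code_steps_binary:
  assumes "justified code_step L1" "enc P1 \<in> set L1" "justified code_step L2" "enc P2 \<in> set L2"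
    "c = pe t (pe (enc P1) (enc P2))" "t = 4 \<or> t = 5 \<or> t = 6"
  shows "\<exists>L. justified code_step L \<and> c \<in> set L"
proof -
  have "code_step (set (L1 @ L2)) c" unfolding code_step_def using assms(2,4,5,6) by simp
  then have "justified code_step ((L1 @ L2) @ [c])"
    by (intro justified_snoc justified_append mono_code_step assms(1,3))
  then show ?thesis by (intro exI[of _ "(L1 @ L2) @ [c]"]) simp
qed

lemma code_steps_complete: "\<exists>L. justified code_step L \<and> enc P \<in> set L"
proof (induction P)
  case Zero show ?case by (rule exI[of _ "[enc Zero]"]) (simp add: justified_def code_step_def)
next
  case Succ show ?case by (rule exI[of _ "[enc Succ]"]) (simp add: justified_def code_step_def)
next
  case Fst show ?case by (rule exI[of _ "[enc Fst]"]) (simp add: justified_def code_step_def)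
next
  case Snd show ?case by (rule exI[of _ "[enc Snd]"]) (simp add: justified_def code_step_def)
next
  case (Comp P1 P2)
  then obtain L1 L2 where "justified code_step L1" "enc P1 \<in> set L1" "justified code_step L2" "enc P2 \<in> set L2" by blast
  from code_steps_binary[OF this] show ?case by simp
next
  case (Pair P1 P2)
  then obtain L1 L2 where "justified code_step L1" "enc P1 \<in> set L1" "justified code_step L2" "enc P2 \<in> set L2" by blast
  from code_steps_binary[OF this] show ?case by simp
next
  case (Rec P1 P2)
  then obtain L1 L2 where "justified code_step L1" "enc P1 \<in> set L1" "justified code_step L2" "enc P2 \<in> set L2" by blast
  from code_steps_binary[OF this] show ?case by simp
next
  case (Mu P1)
  then obtain L1 where L1: "justified code_step L1" "enc P1 \<in> set L1" by blast
  have "code_step (set L1) (enc (Mu P1))" unfolding code_step_def using L1 by simp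
  then have "justified code_step (L1 @ [enc (Mu P1)])" by (intro justified_snoc L1)
  then show ?case by (intro exI[of _ "L1 @ [enc (Mu P1)]"]) simp
qed

definition trace :: "nat list \<Rightarrow> nat list \<Rightarrow> bool" where
  "trace Lc L \<longleftrightarrow> justified code_step Lc \<and> justified (eval_step (set Lc)) L"

lemma trace_sound: "trace Lc L \<Longrightarrow> \<forall>v\<in>set L. valid v"
proof -
  assume "trace Lc L"
  then have codes: "justified code_step Lc" and steps: "justified (eval_step (set Lc)) L"
    unfolding trace_def by blast+
  have "set Lc \<subseteq> range enc" using code_steps_sound[OF codes] .
  then show ?thesis by (rule justified_induct[OF steps, OF eval_step_sound])
qed

lemma trace_append: "trace Lc1 L1 \<Longrightarrow> trace Lc2 L2 \<Longrightarrow> trace (Lc1 @ Lc2) (L1 @ L2)"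
proof -
  assume a: "trace Lc1 L1" "trace Lc2 L2"
  have "justified (eval_step (set (Lc1 @ Lc2))) L1" "justified (eval_step (set (Lc1 @ Lc2))) L2"
    using a justified_eval_step_mono unfolding trace_def by fastforce+
  then show ?thesis using a unfolding trace_def by (simp add: justified_append mono_code_step mono_eval_step)
qed

lemma trace_snoc: "trace Lc L \<Longrightarrow> eval_step (set Lc) (set L) v \<Longrightarrow> trace Lc (L @ [v])"
  unfolding trace_def by (simp add: justified_snoc)

lemma trace_add_code: "trace Lc L \<Longrightarrow> \<exists>Lc'. trace (Lc @ Lc') L \<and> enc P \<in> set (Lc @ Lc')"
proof -
  assume a: "trace Lc L"
  obtain L' where L': "justified code_step L'" "enc P \<in> set L'" using code_steps_complete by blast
  have "trace (Lc @ L') L" using a L' justified_eval_step_mono unfolding trace_def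
    by (simp add: justified_append mono_code_step) (meson Un_upper1)
  then show ?thesis using L' by auto
qed

lemma trace_many:
  assumes "\<forall>m E E'. E \<subseteq> E' \<longrightarrow> Q m E \<longrightarrow> Q m E'"
  shows "\<forall>m<(n::nat). \<exists>Lc L. trace Lc L \<and> Q m (set L) \<Longrightarrow> \<exists>Lc L. trace Lc L \<and> (\<forall>m<n. Q m (set L))"
proof (induction n)
  case 0 then show ?case by (intro exI[of _ "[]"]) (auto simp: trace_def)
next
  case (Suc n)
  then obtain Lc L where 1: "trace Lc L" "\<forall>m<n. Q m (set L)" by auto
  obtain Lc' L' where 2: "trace Lc' L'" "Q n (set L')" using Suc.prems by blast
  have "\<forall>m<Suc n. Q m (set (L @ L'))"
  proof (intro allI impI)
    fix m assume "m < Suc n"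
    then consider "m < n" | "m = n" by linarith
    then show "Q m (set (L @ L'))"
    proof cases
      case 1 then show ?thesis using \<open>\<forall>m<n. Q m (set L)\<close> assms by (metis Un_upper1 set_append)
    next
      case 2 then show ?thesis using \<open>Q n (set L')\<close> assms by (metis Un_upper2 set_append)
    qed
  qed
  then show ?case using trace_append[OF 1(1) 2(1)] by blast
qed

lemma trace_Nil: "trace [] []"
  by (simp add: trace_def)

lemma trace_extend: "trace Lc L \<Longrightarrow> eval_step (set Lc) (set L) v \<Longrightarrow> \<exists>Lc L. trace Lc L \<and> v \<in> set L"
  using trace_snoc by fastforce

(* Completeness: every true evaluation occurs in some trace, by rule
   induction on eval; the minimisation rule needs one trace for each smaller
   argument, which trace_many merges. *)

lemma trace_Mu:
  assumes "\<exists>Lc L. trace Lc L \<and> tri (enc f) (pe n x) 0 \<in> set L"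
    and "\<forall>m<n. \<exists>Lc L. trace Lc L \<and> (\<exists>v. v \<noteq> 0 \<and> tri (enc f) (pe m x) v \<in> set L)"
  shows "\<exists>Lc L. trace Lc L \<and> tri (enc (Mu f)) x n \<in> set L"
proof -
  obtain Lc1 L1 where a: "trace Lc1 L1" "tri (enc f) (pe n x) 0 \<in> set L1" using assms(1) by blast
  have "\<exists>Lc L. trace Lc L \<and> (\<forall>m<n. (\<lambda>m E. \<exists>v. v \<noteq> 0 \<and> tri (enc f) (pe m x) v \<in> E) m (set L))"
    by (rule trace_many) (use assms(2) in blast)+
  then obtain Lc2 L2 where b: "trace Lc2 L2" "\<forall>m<n. \<exists>v. v \<noteq> 0 \<and> tri (enc f) (pe m x) v \<in> set L2" by blast
  have c: "\<forall>m<n. \<exists>e\<in>set (L1 @ L2). tc e = enc f \<and> tx e = pe m x \<and> ty e \<noteq> 0"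
  proof (intro allI impI)
    fix m assume "m < n"
    then obtain v where "v \<noteq> 0" "tri (enc f) (pe m x) v \<in> set L2" using b by blast
    then show "\<exists>e\<in>set (L1 @ L2). tc e = enc f \<and> tx e = pe m x \<and> ty e \<noteq> 0"
      by (intro bexI[of _ "tri (enc f) (pe m x) v"]) simp_all
  qed
  have "eval_step (set (Lc1 @ Lc2)) (set (L1 @ L2)) (tri (enc (Mu f)) x n)"
    unfolding eval_step_def using a(2) c by simp
  then show ?thesis by (rule trace_extend[OF trace_append[OF a(1) b(1)]])
qed

lemma trace_complete: "eval P x y \<Longrightarrow> \<exists>Lc L. trace Lc L \<and> tri (enc P) x y \<in> set L"
proof (induction rule: eval.induct)
  case (eval_Zero x)
  show ?case by (rule trace_extend[OF trace_Nil]) (simp add: eval_step_def)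
next
  case (eval_Succ x)
  show ?case by (rule trace_extend[OF trace_Nil]) (simp add: eval_step_def)
next
  case (eval_Fst x)
  show ?case by (rule trace_extend[OF trace_Nil]) (simp add: eval_step_def)
next
  case (eval_Snd x)
  show ?case by (rule trace_extend[OF trace_Nil]) (simp add: eval_step_def)
next
  case (eval_Comp g x y f z)
  then obtain Lc1 L1 Lc2 L2 where a: "trace Lc1 L1" "tri (enc g) x y \<in> set L1" "trace Lc2 L2" "tri (enc f) y z \<in> set L2"
    by blast
  have "eval_step (set (Lc1 @ Lc2)) (set (L1 @ L2)) (tri (enc (Comp f g)) x z)"
    unfolding eval_step_def using a by simp (rule bexI[of _ "tri (enc g) x y"], simp_all)
  then show ?case by (rule trace_extend[OF trace_append[OF a(1) a(3)]])
next
  case (eval_Pair f x a g b)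
  then obtain Lc1 L1 Lc2 L2 where a: "trace Lc1 L1" "tri (enc f) x a \<in> set L1" "trace Lc2 L2" "tri (enc g) x b \<in> set L2"
    by blast
  have "eval_step (set (Lc1 @ Lc2)) (set (L1 @ L2)) (tri (enc (recf.Pair f g)) x (pe a b))"
    unfolding eval_step_def using a
    by simp (metis UnI1 UnI2 tri_simps)
  then show ?case by (rule trace_extend[OF trace_append[OF a(1) a(3)]])
next
  case (eval_Rec0 f x y g)
  then obtain Lc1 L1 where a: "trace Lc1 L1" "tri (enc f) x y \<in> set L1" by blast
  from trace_add_code[OF a(1), of g] obtain Lc' where b: "trace (Lc1 @ Lc') L1" "enc g \<in> set (Lc1 @ Lc')" by blast
  have "eval_step (set (Lc1 @ Lc')) (set L1) (tri (enc (Rec f g)) (pe 0 x) y)"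
    unfolding eval_step_def using a b by simp
  then show ?case by (rule trace_extend[OF b(1)])
next
  case (eval_RecS f g n x y z)
  then obtain Lc1 L1 Lc2 L2 where a: "trace Lc1 L1" "tri (enc (Rec f g)) (pe n x) y \<in> set L1" "trace Lc2 L2"
     "tri (enc g) (pe n (pe y x)) z \<in> set L2"
    by blast
  have "eval_step (set (Lc1 @ Lc2)) (set (L1 @ L2)) (tri (enc (Rec f g)) (pe (Suc n) x) z)"
    unfolding eval_step_def using a
    by simp (rule bexI[of _ "tri (enc (Rec f g)) (pe n x) y"], simp_all)
  then show ?case by (rule trace_extend[OF trace_append[OF a(1) a(3)]])
next
  case (eval_Mu f n x)
  show ?case by (rule trace_Mu) (use eval_Mu.IH in blast)+
qed

lemma valid_iff_trace: "valid v \<longleftrightarrow> (\<exists>Lc L. trace Lc L \<and> v \<in> set L)"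
proof
  assume "valid v"
  then obtain P where "tc v = enc P" "eval P (tx v) (ty v)" by (auto simp: valid_def)
  then show "\<exists>Lc L. trace Lc L \<and> v \<in> set L" using trace_complete tri_unpair by metis
next
  assume "\<exists>Lc L. trace Lc L \<and> v \<in> set L"
  then show "valid v" using trace_sound by blast
qed

definition nth_code :: "nat \<Rightarrow> nat \<Rightarrow> nat" where
  "nth_code t i = p1 (rec_nat t (\<lambda>_ y. p2 y) i)"

lemma rec_p2_Suc: "rec_nat t (\<lambda>_ y. p2 y) (Suc i) = rec_nat (p2 t) (\<lambda>_ y. p2 y) i"
  by (induction i) auto

lemma computable_nth_code[computable_intros]: "total_computable f \<Longrightarrow> total_computable g \<Longrightarrow> total_computable (\<lambda>x. nth_code (f x) (g x))"
proof -
  assume f: "total_computable f" and g: "total_computable g"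
  have "total_computable (\<lambda>w. rec_nat ((\<lambda>x. x) (f w)) (\<lambda>k y. (\<lambda>v. p2 (p1 (p2 v))) (pe k (pe y (f w)))) (g w))"
    by (rule computable_rec_nat) (auto intro!: computable_intros f g)
  then have "total_computable (\<lambda>w. p1 (rec_nat ((\<lambda>x. x) (f w)) (\<lambda>k y. (\<lambda>v. p2 (p1 (p2 v))) (pe k (pe y (f w)))) (g w)))"
    by (rule computable_p1)
  then show ?thesis by (simp add: nth_code_def)
qed

primrec list_code :: "nat list \<Rightarrow> nat" where
  "list_code [] = 0" | "list_code (a # L) = pe a (list_code L)"

lemma nth_code_0: "nth_code t 0 = p1 t" by (simp add: nth_code_def)

lemma nth_code_Suc: "nth_code t (Suc i) = nth_code (p2 t) i" unfolding nth_code_def by (simp only: rec_p2_Suc)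

lemma nth_code_list_code: "i < length L \<Longrightarrow> nth_code (list_code L) i = L ! i"
proof (induction L arbitrary: i)
  case Nil then show ?case by simp
next
  case (Cons a L) then show ?case
    by (cases i) (auto simp: nth_code_0 nth_code_Suc)
qed

(* coded_trace nc cs n t: the numbers cs and t code a trace with nc program
   codes and n triples.  Unlike trace, this refers only to bounded
   quantification over numbers, hence is decidable. *)

definition coded_trace :: "nat \<Rightarrow> nat \<Rightarrow> nat \<Rightarrow> nat \<Rightarrow> bool" where
  "coded_trace nc cs n t \<longleftrightarrow> (\<forall>k<nc. code_step (nth_code cs ` {..<k}) (nth_code cs k)) \<and>
     (\<forall>k<n. eval_step (nth_code cs ` {..<nc}) (nth_code t ` {..<k}) (nth_code t k))"

lemma image_nth_code_list_code: "k \<le> length L \<Longrightarrow> nth_code (list_code L) ` {..<k} = set (take k L)"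
proof -
  assume k: "k \<le> length L"
  have "nth_code (list_code L) ` {..<k} = (\<lambda>i. L ! i) ` {..<k}"
    by (rule image_cong) (use k in \<open>auto simp: nth_code_list_code\<close>)
  also have "\<dots> = set (take k L)" using k by (simp add: set_take_nth min_absorb1)
  finally show ?thesis .
qed

lemma image_nth_lessThan: "k \<le> length L \<Longrightarrow> (\<lambda>i. L ! i) ` {..<k} = set (take k L)"
  by (simp add: set_take_nth min_absorb1)

lemma trace_coded: "trace Lc L \<Longrightarrow> coded_trace (length Lc) (list_code Lc) (length L) (list_code L)"
proof -
  assume a: "trace Lc L"
  have 1: "code_step (nth_code (list_code Lc) ` {..<k}) (nth_code (list_code Lc) k)" if "k < length Lc" for k
  proof -
    have "code_step (set (take k Lc)) (Lc ! k)" using a that unfolding trace_def justified_def by blast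
    then show ?thesis using that by (simp add: image_nth_code_list_code image_nth_lessThan nth_code_list_code)
  qed
  have 2: "eval_step (nth_code (list_code Lc) ` {..<length Lc}) (nth_code (list_code L) ` {..<k}) (nth_code (list_code L) k)" if "k < length L" for k
  proof -
    have "eval_step (set Lc) (set (take k L)) (L ! k)" using a that unfolding trace_def justified_def by blast
    then show ?thesis using that by (simp add: image_nth_code_list_code image_nth_lessThan nth_code_list_code less_imp_le)
  qed
  show ?thesis unfolding coded_trace_def using 1 2 by blast
qed

lemma set_take_map: "k \<le> m \<Longrightarrow> set (take k (map f [0..<m])) = f ` {..<k}"
  by (simp add: take_map atLeast0LessThan min_absorb1)

lemma set_map_upt: "set (map f [0..<m]) = f ` {..<m}"
  by (simp add: atLeast0LessThan)

lemma coded_trace_trace: "coded_trace nc cs n t \<Longrightarrow> trace (map (nth_code cs) [0..<nc]) (map (nth_code t) [0..<n])"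
proof -
  assume a: "coded_trace nc cs n t"
  show ?thesis unfolding trace_def justified_def
  proof (intro conjI allI impI)
    fix k assume "k < length (map (nth_code cs) [0..<nc])"
    then show "code_step (set (take k (map (nth_code cs) [0..<nc]))) (map (nth_code cs) [0..<nc] ! k)"
      using a unfolding coded_trace_def by (simp add: set_take_map)
  next
    fix k assume "k < length (map (nth_code t) [0..<n])"
    then show "eval_step (set (map (nth_code cs) [0..<nc])) (set (take k (map (nth_code t) [0..<n]))) (map (nth_code t) [0..<n] ! k)"
      using a unfolding coded_trace_def by (simp add: set_take_map set_map_upt atLeast0LessThan)
  qed
qed

lemma valid_iff_coded_trace: "valid v \<longleftrightarrow> (\<exists>nc cs n t. coded_trace nc cs n t \<and> (\<exists>k<n. nth_code t k = v))"
proof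
  assume "valid v"
  then obtain Lc L where "trace Lc L" "v \<in> set L" using valid_iff_trace by blast
  then show "\<exists>nc cs n t. coded_trace nc cs n t \<and> (\<exists>k<n. nth_code t k = v)"
    using trace_coded by (metis in_set_conv_nth nth_code_list_code)
next
  assume "\<exists>nc cs n t. coded_trace nc cs n t \<and> (\<exists>k<n. nth_code t k = v)"
  then obtain nc cs n t k where "coded_trace nc cs n t" "k < n" "nth_code t k = v" by blast
  then show "valid v" using valid_iff_trace coded_trace_trace by fastforce
qed

definition halts_by :: "nat \<Rightarrow> nat \<Rightarrow> nat \<Rightarrow> bool" where
  "halts_by a b w \<longleftrightarrow> coded_trace (p1 (p1 w)) (p2 (p1 w)) (p1 (p2 w)) (p2 (p2 w)) \<and>
     (\<exists>k<p1 (p2 w). tc (nth_code (p2 (p2 w)) k) = a \<and> tx (nth_code (p2 (p2 w)) k) = b)"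

lemma W_iff_halts_by: "b \<in> W a \<longleftrightarrow> (\<exists>w. halts_by a b w)"
proof -
  have "b \<in> W a \<longleftrightarrow> (\<exists>y. valid (tri a b y))"
    by (auto simp: W_def psi_def valid_def split: if_splits)
  also have "\<dots> \<longleftrightarrow> (\<exists>nc cs n t. coded_trace nc cs n t \<and> (\<exists>k<n. tc (nth_code t k) = a \<and> tx (nth_code t k) = b))"
    unfolding valid_iff_coded_trace by (metis tri_unpair tri_simps(1,2))
  also have "\<dots> \<longleftrightarrow> (\<exists>w. halts_by a b w)"
    unfolding halts_by_def
    by (metis fst_conv prod_encode_inverse snd_conv)
  finally show ?thesis .
qed

(* Images of initial segments become bounded quantifiers, the form that
   computable_intros decides. *)

lemma mem_image_lessThan: "x \<in> f ` {..<k} \<longleftrightarrow> (\<exists>i<k. f i = x)" by auto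

lemma bex_image_lessThan: "(\<exists>e\<in>f ` {..<k}. P e) \<longleftrightarrow> (\<exists>i<k. P (f i))" by auto

lemma decidable_coded_trace:
  assumes "total_computable a" "total_computable b" "total_computable c" "total_computable d"
  shows "decidable (\<lambda>x. coded_trace (a x) (b x) (c x) (d x))"
proof -
  have "decidable (\<lambda>z. coded_trace (p1 z) (p1 (p2 z)) (p1 (p2 (p2 z))) (p2 (p2 (p2 z))))"
    unfolding coded_trace_def eval_step_def code_step_def mem_image_lessThan bex_image_lessThan
    by (intro computable_intros)
  from decidable_compose[OF this, of "\<lambda>x. pe (a x) (pe (b x) (pe (c x) (d x)))"] show ?thesis
    by (simp add: computable_pe assms)
qed

lemma decidable_halts_by:
  assumes "total_computable a" "total_computable b" "total_computable c"
  shows "decidable (\<lambda>x. halts_by (a x) (b x) (c x))"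
proof -
  have "decidable (\<lambda>z. halts_by (p1 z) (p1 (p2 z)) (p2 (p2 z)))"
    unfolding halts_by_def by (intro computable_intros decidable_coded_trace)
  from decidable_compose[OF this, of "\<lambda>x. pe (a x) (pe (b x) (c x))"] show ?thesis
    by (simp add: computable_pe assms)
qed

(* S is Pi^0_2: self-constructing is expressed by the decidable matrix
   sc_matrix e y z, where y codes a, b and two halting witnesses, and z codes an
   element of W e with its witness together with the halting witnesses for the
   two inclusions between W a and W e. *)

lemma self_constructing_iff: "self_constructing (W e) \<longleftrightarrow> W e \<noteq> {} \<and> (\<forall>a\<in>W e. W a = W e)"
  unfolding self_constructing_def ce_set_def by blast

definition sc_matrix :: "nat \<Rightarrow> nat \<Rightarrow> nat \<Rightarrow> bool" where
  "sc_matrix e y z \<longleftrightarrow> halts_by e (p1 z) (p1 (p2 z)) \<and>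
    (halts_by e (p1 y) (p1 (p2 (p2 y))) \<and> halts_by (p1 y) (p1 (p2 y)) (p2 (p2 (p2 y))) \<longrightarrow> halts_by e (p1 (p2 y)) (p1 (p2 (p2 z)))) \<and>
    (halts_by e (p1 y) (p1 (p2 (p2 y))) \<and> halts_by e (p1 (p2 y)) (p2 (p2 (p2 y))) \<longrightarrow> halts_by (p1 y) (p1 (p2 y)) (p2 (p2 (p2 z))))"

lemma matrix_of_self_constructing:
  assumes sc: "self_constructing (W e)"
  shows "\<exists>z. sc_matrix e y z"
proof -
  obtain a0 where "a0 \<in> W e" using sc self_constructing_iff by blast
  then obtain w0 where w0: "halts_by e a0 w0" using W_iff_halts_by by blast
  let ?a = "p1 y" and ?b = "p1 (p2 y)" and ?c1 = "p1 (p2 (p2 y))" and ?c2 = "p2 (p2 (p2 y))"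
  obtain w1 where w1: "halts_by e ?a ?c1 \<and> halts_by ?a ?b ?c2 \<longrightarrow> halts_by e ?b w1"
  proof (cases "halts_by e ?a ?c1 \<and> halts_by ?a ?b ?c2")
    case True
    then have "?a \<in> W e" "?b \<in> W ?a" using W_iff_halts_by by blast+
    then have "?b \<in> W e" using sc self_constructing_iff by blast
    then show ?thesis using that W_iff_halts_by by blast
  qed (use that in blast)
  obtain w2 where w2: "halts_by e ?a ?c1 \<and> halts_by e ?b ?c2 \<longrightarrow> halts_by ?a ?b w2"
  proof (cases "halts_by e ?a ?c1 \<and> halts_by e ?b ?c2")
    case True
    then have "?a \<in> W e" "?b \<in> W e" using W_iff_halts_by by blast+
    then have "?b \<in> W ?a" using sc self_constructing_iff by blast
    then show ?thesis using that W_iff_halts_by by blast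
  qed (use that in blast)
  have "sc_matrix e y (pe a0 (pe w0 (pe w1 w2)))"
    unfolding sc_matrix_def using w0 w1 w2 by simp
  then show ?thesis by blast
qed

lemma self_constructing_of_matrix:
  assumes H: "\<forall>y. \<exists>z. sc_matrix e y z"
  shows "self_constructing (W e)"
proof -
  have "W e \<noteq> {}"
    using H[rule_format, of 0] W_iff_halts_by unfolding sc_matrix_def by blast
  moreover have "W a = W e" if a: "a \<in> W e" for a
  proof
    show "W a \<subseteq> W e"
    proof
      fix b assume "b \<in> W a"
      then obtain c1 c2 where "halts_by e a c1" "halts_by a b c2" using a W_iff_halts_by by blast
      moreover obtain z where "sc_matrix e (pe a (pe b (pe c1 c2))) z" using H by blast
      ultimately show "b \<in> W e" unfolding sc_matrix_def using W_iff_halts_by by auto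
    qed
  next
    show "W e \<subseteq> W a"
    proof
      fix b assume "b \<in> W e"
      then obtain c1 c2 where "halts_by e a c1" "halts_by e b c2" using a W_iff_halts_by by blast
      moreover obtain z where "sc_matrix e (pe a (pe b (pe c1 c2))) z" using H by blast
      ultimately show "b \<in> W a" unfolding sc_matrix_def using W_iff_halts_by by auto
    qed
  qed
  ultimately show ?thesis using self_constructing_iff by blast
qed

lemma Pi02I:
  assumes "decidable (\<lambda>u. P (p1 u) (p1 (p2 u)) (p2 (p2 u)))"
    and "\<And>x. x \<in> A \<longleftrightarrow> (\<forall>y. \<exists>z. P x y z)"
  shows "Pi02 A"
  unfolding Pi02_def
proof (intro exI conjI)
  show "computable_set {u. P (p1 u) (p1 (p2 u)) (p2 (p2 u))}"
    using assms(1) unfolding decidable_def computable_set_def by simp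
  show "\<forall>x. x \<in> A \<longleftrightarrow> (\<forall>y. \<exists>z. pe x (pe y z) \<in> {u. P (p1 u) (p1 (p2 u)) (p2 (p2 u))})"
    using assms(2) by simp
qed

lemma Pi02_S: "Pi02 {e. self_constructing (W e)}"
proof (rule Pi02I)
  show "decidable (\<lambda>u. sc_matrix (p1 u) (p1 (p2 u)) (p2 (p2 u)))"
    unfolding sc_matrix_def by (intro computable_intros decidable_halts_by)
  show "x \<in> {e. self_constructing (W e)} \<longleftrightarrow> (\<forall>y. \<exists>z. sc_matrix x y z)" for x
    using matrix_of_self_constructing self_constructing_of_matrix by blast
qed

lemma Pi02_Tot: "Pi02 Tot"
proof (rule Pi02I)
  show "decidable (\<lambda>u. halts_by (p1 u) (p1 (p2 u)) (p2 (p2 u)))"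
    by (intro computable_intros decidable_halts_by)
  show "x \<in> Tot \<longleftrightarrow> (\<forall>y. \<exists>z. halts_by x y z)" for x
    by (auto simp: Tot_def W_iff_halts_by[symmetric])
qed

definition konst_code :: "nat \<Rightarrow> nat" where "konst_code n = enc (konst n)"

lemma konst_code_rec: "konst_code n = rec_nat (pe 0 0) (\<lambda>k y. pe 4 (pe (pe 1 0) y)) n"
  by (induction n) (auto simp: konst_code_def)

lemma computable_konst_code[computable_intros]: "total_computable f \<Longrightarrow> total_computable (\<lambda>x. konst_code (f x))"
proof -
  assume f: "total_computable f"
  have "total_computable (\<lambda>w. rec_nat ((\<lambda>_. pe 0 0) (f w)) (\<lambda>k y. (\<lambda>v. pe 4 (pe (pe 1 0) (p1 (p2 v)))) (pe k (pe y (f w)))) (f w))"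
    by (rule computable_rec_nat) (auto intro!: computable_intros f)
  then show ?thesis by (simp add: konst_code_rec)
qed

lemma inj_konst: "konst a = konst b \<Longrightarrow> a = b"
  by (induction a arbitrary: b; case_tac b; auto)

lemma konst_code_inj: "konst_code a = konst_code b \<Longrightarrow> a = b"
  unfolding konst_code_def using inj_enc inj_konst by (meson injD)

definition smn :: "recf \<Rightarrow> nat \<Rightarrow> recf" where
  "smn M p = Comp M (recf.Pair (konst p) (recf.Pair Fst Snd))"

definition smn_code :: "nat \<Rightarrow> nat \<Rightarrow> nat" where
  "smn_code m p = pe 4 (pe m (pe 5 (pe (konst_code p) (enc (recf.Pair Fst Snd)))))"

lemma smn_code_enc: "smn_code (enc M) p = enc (smn M p)"
  by (simp add: smn_code_def smn_def konst_code_def)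

lemma smn_code_inj: "smn_code m p = smn_code m p' \<Longrightarrow> p = p'"
  by (simp add: smn_code_def) (use konst_code_inj in blast)

lemma eval_smn: "eval (smn M p) z y \<longleftrightarrow> eval M (pe p z) y"
proof -
  have arg: "eval (recf.Pair (konst p) (recf.Pair Fst Snd)) z (pe p z)"
    using eval_Pair[OF eval_Fst eval_Snd, of z] by (auto intro!: eval_Pair eval_konst simp: pe_unpair)
  show ?thesis
  proof
    assume "eval (smn M p) z y"
    then show "eval M (pe p z) y" unfolding smn_def
      by (cases rule: eval.cases) (use arg eval_det in blast)+
  next
    assume "eval M (pe p z) y"
    then show "eval (smn M p) z y" unfolding smn_def using arg eval_Comp by blast
  qed
qed

lemma W_smn_code: "W (smn_code (enc M) p) = {z. \<exists>y. eval M (pe p z) y}"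
  unfolding smn_code_enc W_def psi_def by (auto simp: eval_smn split: if_splits)

lemma eval_Mu_total:
  assumes F: "\<And>v. eval F v (f v)"
  shows "(\<exists>y. eval (Mu F) u y) \<longleftrightarrow> (\<exists>n. f (pe n u) = 0)"
proof
  assume "\<exists>y. eval (Mu F) u y"
  then obtain n where "eval (Mu F) u n" by blast
  then have "eval F (pe n u) 0" by (cases rule: eval.cases) auto
  then show "\<exists>n. f (pe n u) = 0" using F eval_det by blast
next
  assume "\<exists>n. f (pe n u) = 0"
  then obtain n where n: "f (pe n u) = 0" "\<forall>m<n. f (pe m u) \<noteq> 0"
    using exists_least_iff[of "\<lambda>n. f (pe n u) = 0"] by blast
  have "eval (Mu F) u n"
    by (rule eval_Mu) (use n F in \<open>metis\<close>, use n F in blast)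
  then show "\<exists>y. eval (Mu F) u y" by blast
qed

lemma W_Mu_decidable:
  assumes "decidable (\<lambda>v. Q (p2 v) (p1 v))"
  obtains M where "\<And>u. W (smn_code (enc M) u) = {z. \<exists>n. Q (pe u z) n}"
proof -
  obtain F where F: "\<And>v. eval F v (if Q (p2 v) (p1 v) then 0 else 1)"
    using computable_if[OF assms computable_const computable_const, of 0 1]
    unfolding total_computable_def by blast
  have "W (smn_code (enc (Mu F)) u) = {z. \<exists>n. Q (pe u z) n}" for u
    unfolding W_smn_code using eval_Mu_total[OF F] by (auto split: if_splits)
  then show thesis by (rule that)
qed

(* The self-referential family: family_index m x i instantiates the program
   with code m at the parameter <m, x, i>, so the program can compute the
   indices of its own family. *)

definition family_index :: "nat \<Rightarrow> nat \<Rightarrow> nat \<Rightarrow> nat" where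
  "family_index m x j = smn_code m (pe m (pe x j))"

lemma inj_family_index: "inj (family_index m x)"
  by (rule injI) (auto simp: family_index_def dest: smn_code_inj)

lemma self_referential_family:
  assumes P: "decidable (\<lambda>v. P (p1 v) (p1 (p2 v)) (p2 (p2 v)))"
  obtains m where "\<And>x i. W (family_index m x i) = family_index m x ` {j. j \<le> Suc i \<or> (\<exists>w. P x j w)}"
proof -
  define Q where "Q u n \<longleftrightarrow>
      p2 u = family_index (p1 (p1 u)) (p1 (p2 (p1 u))) (p1 n) \<and>
      (p1 n \<le> Suc (p2 (p2 (p1 u))) \<or> P (p1 (p2 (p1 u))) (p1 n) (p2 n))" for u n
  have "decidable (\<lambda>v. P (p1 (p2 (p1 (p2 v)))) (p1 (p1 v)) (p2 (p1 v)))"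
    using decidable_compose[OF P, of "\<lambda>v. pe (p1 (p2 (p1 (p2 v)))) (pe (p1 (p1 v)) (p2 (p1 v)))"]
    by (simp add: computable_intros)
  then have "decidable (\<lambda>v. Q (p2 v) (p1 v))"
    unfolding Q_def family_index_def smn_code_def by (intro computable_intros)
  then obtain M where M: "\<And>u. W (smn_code (enc M) u) = {z. \<exists>n. Q (pe u z) n}"
    using W_Mu_decidable by blast
  have "W (family_index (enc M) x i) = family_index (enc M) x ` {j. j \<le> Suc i \<or> (\<exists>w. P x j w)}" for x i
  proof -
    let ?c = "family_index (enc M) x"
    have Q: "Q (pe (pe (enc M) (pe x i)) z) (pe j w) \<longleftrightarrow> z = ?c j \<and> (j \<le> Suc i \<or> P x j w)"
      for z j w
      unfolding Q_def by (simp add: family_index_def)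
    have "(\<exists>n. Q (pe (pe (enc M) (pe x i)) z) n) \<longleftrightarrow> (\<exists>j w. Q (pe (pe (enc M) (pe x i)) z) (pe j w))"
      for z by (metis pe_unpair)
    then show ?thesis
      unfolding family_index_def[of "enc M" x i] M[unfolded family_index_def] Q
      by (auto simp: family_index_def)
  qed
  then show thesis by (rule that)
qed

(* In such a family W (c 0) is self-constructing iff B holds from 2 on: the
   chain c 0, c 1, ... forces every c j into W (c 0). *)

lemma self_constructing_chain:
  assumes inj: "inj c" and Wc: "\<And>i. W (c i) = c ` {j. j \<le> Suc i \<or> B j}"
  shows "self_constructing (W (c 0)) \<longleftrightarrow> (\<forall>j\<ge>2. B j)"
proof
  assume sc: "self_constructing (W (c 0))"
  have all: "c n \<in> W (c 0)" for n
  proof (induction n)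
    case 0 show ?case by (simp add: Wc)
  next
    case (Suc n)
    then have "W (c n) = W (c 0)" using sc self_constructing_iff by blast
    moreover have "c (Suc n) \<in> W (c n)" by (simp add: Wc)
    ultimately show ?case by simp
  qed
  show "\<forall>j\<ge>2. B j"
  proof (intro allI impI)
    fix j :: nat assume "2 \<le> j"
    moreover from all[of j] have "j \<le> 1 \<or> B j"
      unfolding Wc by (auto dest: injD[OF inj])
    ultimately show "B j" by simp
  qed
next
  assume B: "\<forall>j\<ge>2. B j"
  have "j \<le> Suc i \<or> B j" for i j
    using B by (cases "j \<ge> 2") auto
  then have W_range: "W (c i) = range c" for i
    unfolding Wc by auto
  show "self_constructing (W (c 0))"
    unfolding self_constructing_iff by (auto simp only: W_range)
qed

lemma all_ex_iff_stages:
  "(\<forall>y. \<exists>z. P y z) \<longleftrightarrow> (\<forall>j\<ge>k. \<exists>w. \<forall>y<Suc j. \<exists>z<Suc w. P y z)"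
proof
  assume "\<forall>y. \<exists>z. P y z"
  then obtain g where g: "\<And>y. P y (g y)" by metis
  have "\<forall>y<Suc j. \<exists>z<Suc (Max (g ` {..j})). P y z" for j
  proof (intro allI impI)
    fix y assume "y < Suc j"
    then have "g y \<le> Max (g ` {..j})" by (simp add: less_Suc_eq_le)
    then show "\<exists>z<Suc (Max (g ` {..j})). P y z" using g by (metis le_imp_less_Suc)
  qed
  then show "\<forall>j\<ge>k. \<exists>w. \<forall>y<Suc j. \<exists>z<Suc w. P y z" by blast
next
  assume stages: "\<forall>j\<ge>k. \<exists>w. \<forall>y<Suc j. \<exists>z<Suc w. P y z"
  show "\<forall>y. \<exists>z. P y z"
  proof
    fix y
    obtain w where "\<forall>y'<Suc (max y k). \<exists>z<Suc w. P y' z" using stages by (meson max.cobounded2)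
    then show "\<exists>z. P y z" by (meson le_imp_less_Suc max.cobounded1)
  qed
qed

lemma Pi02_hard:
  assumes "Pi02 A"
  shows "m_reducible A {e. self_constructing (W e)}"
proof -
  from assms obtain R where R: "computable_set R"
    and A: "\<And>x. x \<in> A \<longleftrightarrow> (\<forall>y. \<exists>z. pe x (pe y z) \<in> R)" unfolding Pi02_def by blast
  define P where "P x j w \<longleftrightarrow> (\<forall>y<Suc j. \<exists>z<Suc w. pe x (pe y z) \<in> R)" for x j w
  have "decidable (\<lambda>v. P (p1 v) (p1 (p2 v)) (p2 (p2 v)))"
    unfolding P_def by (intro computable_intros decidable_mem[OF R])
  then obtain m where Wm:
    "\<And>x i. W (family_index m x i) = family_index m x ` {j. j \<le> Suc i \<or> (\<exists>w. P x j w)}"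
    using self_referential_family by blast
  have "x \<in> A \<longleftrightarrow> self_constructing (W (family_index m x 0))" for x
    unfolding A all_ex_iff_stages[where k=2]
    by (rule self_constructing_chain[OF inj_family_index Wm, symmetric, unfolded P_def])
  moreover have "total_computable (\<lambda>x. family_index m x 0)"
    unfolding family_index_def smn_code_def by (intro computable_intros)
  ultimately show ?thesis unfolding m_reducible_def by auto
qed

theorem mainTheorem8:
  defines "S \<equiv> {e. self_constructing (W e)}"
  shows "Pi02 S \<and> (\<forall>A. Pi02 A \<longrightarrow> m_reducible A S) \<and> m_reducible Tot S"
proof -
  have "Pi02 S" unfolding S_def by (rule Pi02_S)
  moreover have hard: "\<forall>A. Pi02 A \<longrightarrow> m_reducible A S"
    unfolding S_def using Pi02_hard by blast
  moreover have "m_reducible Tot S" using hard Pi02_Tot by blast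
  ultimately show ?thesis by blast
qed

end
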